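(* Let $\ell=\mathrm{SF}$ and suppose $L^{\mathrm{SF}}=0$ and the following conditions hold: 1) $T^{\mathrm{SF}}=I-H^{\mathrm{SF}}C$; 2) $(I-H^{\mathrm{SF}}C)F_1=0$; 3) $\check F^{\mathrm{SF}}$ is Hurwitz. Then the residual signal $res_{\mathrm{SF}}(t)=y_{\mathrm p}(t)-C\hat x^{\mathrm{SF}}(t)$ is affected by the pseudo actuator fault $f_2(t)$ and is decoupled from $a_{\mathrm u}(t)$, $a_{\mathrm y}(t)$ and $f_1(t)$.
   Context: Consider the augmented linear time-invariant cyber-physical system $$\dot x(t)=Ax(t)+Bu(t)+B_{\mathrm a}a_{\mathrm u}(t)+F_1f_1(t)+F_2f_2(t)+N\omega(t),\quad y_{\mathrm p}(t)=Cx(t),\quad y^*(t)=Cx(t)+D_{\mathrm a}a_{\mathrm y}(t),$$ with $x(t)\in\mathbb R^{n+p_{\mathrm f}+p}$ obtained by stacking a plant state $x^{\mathrm s}\in\mathbb R^n$ and the state $x^{\mathrm a}\in\mathbb R^{p_{\mathrm f}+p}$ of an auxiliary system representing sensor faults and sensor noise, so that $A=\mathrm{diag}(A^{\mathrm s},A^{\mathrm a})$, $B=[B^{\mathrm s\top},0]^\top$, $B_{\mathrm a}=[(B^{\mathrm s}S_{\mathrm a})^\top,0]^\top$, $F_1=[L_1^\top,0]^\top$, $F_2=[0,L_2^{\mathrm a\top}]^\top$, $N=\mathrm{diag}(N^{\mathrm s},N^{\mathrm a})$, $C=[C^{\mathrm s},C^{\mathrm a}]$. Here $u(t)\in\mathbb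 R^m$ is the control command (known on the command-and-control (C\&C) side), $u^*(t)=u(t)+S_{\mathrm a}a_{\mathrm u}(t)$ is the input received at the plant, $a_{\mathrm u}(t)$ is an actuator cyber attack, $a_{\mathrm y}(t)$ a sensor cyber attack, $f_1$ an actuator fault, $f_2$ a pseudo actuator fault (representing sensor faults), $\omega$ noise; $y_{\mathrm p}$ is the output measured on the plant side and $y^*$ the output received on the C\&C side. A communication link between the two sides is subject to a cyber attack $a_{\mathrm c}(t)$ with signature $D_{\mathrm{ac}}\in\mathbb R^{n\times n_{\mathrm c}}$. For an index $\ell\in\{\mathrm{AA},\mathrm{SA},\mathrm{AF},\mathrm{SF}\}$, a C\&C side filter $\dot z_{\mathrm c}^\ell=F_{\mathrm p}^\ell z_{\mathrm c}^\ell+T_{\mathrm p}^\ell Bu+K_{\mathrm p}^\ell y^*$ and a plant side filter $\dot z_{\mathrm p}^\ell=F_{\mathrm p}^\ell z_{\mathrm p}^\ell+T_{\mathrm p}^\ell Bu^*+K_{\mathrm p}^\ell y_{\mathrm p}+L_{\mathrm p}^\ell\big(z_{\mathrm p}^\ell-(z_{\mathrm c}^\ell+D_{\mathrm{ac}}a_{\mathrm c})\big)$ are used, with $z_{\mathrm c}^\ell,z_{\mathrm p}^\ell\in\mathbb R^n$, together with a UIO-based detector on the plant side $$\dot z^\ell=F^\ell z^\ell+T^\ell Bu^*+K^\ell y_{\mathrm p}+L^\ell\big(z_{\mathrm p}^\ell-(z_{\mathrm c}^\ell+D_{\mathrm{ac}}a_{\mathrm c})\big),\qquad \hat x^\ell=z^\ell+H^\ell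 y_{\mathrm p},$$ where $F^\ell=A-H^\ell CA-K_1^\ell C$ and $K^\ell=K_1^\ell+F^\ell H^\ell$ for some gain $K_1^\ell$. The residual is $res_\ell(t)=y_{\mathrm p}(t)-C\hat x^\ell(t)=Ce^\ell(t)$ with $e^\ell=x-\hat x^\ell$. With $e_{\mathrm p}^\ell=z_{\mathrm p}^\ell-z_{\mathrm c}^\ell$, the stacked error $\check e^\ell=[e^{\ell\top},e_{\mathrm p}^{\ell\top}]^\top$ has state matrix $\check F^\ell=\begin{bmatrix}F^\ell&-L^\ell\\0&F_{\mathrm p}^\ell+L_{\mathrm p}^\ell\end{bmatrix}$; explicitly $\dot e^\ell=F^\ell e^\ell+(I-T^\ell-H^\ell C)(Bu+B_{\mathrm a}a_{\mathrm u})+(I-H^\ell C)F_1f_1+(I-H^\ell C)F_2f_2+(I-H^\ell C)N\omega-L^\ell e_{\mathrm p}^\ell-L^\ell D_{\mathrm{ac}}a_{\mathrm c}$ and $\dot e_{\mathrm p}^\ell=(F_{\mathrm p}^\ell+L_{\mathrm p}^\ell)e_{\mathrm p}^\ell+T_{\mathrm p}^\ell B_{\mathrm a}a_{\mathrm u}-K_{\mathrm p}^\ell D_{\mathrm a}a_{\mathrm y}-L_{\mathrm p}^\ell D_{\mathrm{ac}}a_{\mathrm c}$. The residual $res_\ell$ is called decoupled from an anomalous signal in $\{a_{\mathrm u},a_{\mathrm y},f_1,f_2\}$ if the dynamics and trajectory of $res_\ell$ are not affected by that signal. *)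

theory Defs
  imports "HOL-Analysis.Analysis"
begin

definition Hurwitz :: "real^'n^'n \<Rightarrow> bool" where
  "Hurwitz M \<longleftrightarrow>
     (\<forall>(lam::complex) (v::complex^'n). v \<noteq> 0 \<and>
        (\<chi> i j. complex_of_real (M$i$j)) *v v = lam *s v \<longrightarrow> Re lam < 0)"

definition block2 :: "real^'b^'a \<Rightarrow> real^'d^'a \<Rightarrow> real^'b^'c \<Rightarrow> real^'d^'c
    \<Rightarrow> real^('b + 'd)^('a + 'c)" where
  "block2 P Q R S = (\<chi> i j. case i of
       Inl a \<Rightarrow> (case j of Inl b \<Rightarrow> P$a$b | Inr d \<Rightarrow> Q$a$d)
     | Inr c \<Rightarrow> (case j of Inl b \<Rightarrow> R$c$b | Inr d \<Rightarrow> S$c$d))"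

text \<open>Closed-loop trajectories (for t \<ge> 0) of the augmented plant, the C&C side filter,
  the plant side filter and the UIO-based detector of index SF.
  x: plant state, zc: C&C filter, zp: plant-side filter, z: detector state.
  Signals: u command, au actuator attack, ay sensor attack, f1 actuator fault,
  f2 pseudo actuator fault, w noise, ac communication-link attack.\<close>
definition sf_traj ::
  "real^'s^'s \<Rightarrow> real^'m^'s \<Rightarrow> real^'q^'s \<Rightarrow> real^'q^'m \<Rightarrow> real^'k^'s \<Rightarrow> real^'j^'s
   \<Rightarrow> real^'w^'s \<Rightarrow> real^'s^'o \<Rightarrow> real^'r^'o
   \<Rightarrow> real^'f^'f \<Rightarrow> real^'s^'f \<Rightarrow> real^'o^'f \<Rightarrow> real^'f^'f \<Rightarrow> real^'c^'f
   \<Rightarrow> real^'s^'s \<Rightarrow> real^'s^'s \<Rightarrow> real^'o^'s \<Rightarrow> real^'f^'s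
   \<Rightarrow> (real \<Rightarrow> real^'m) \<Rightarrow> (real \<Rightarrow> real^'q) \<Rightarrow> (real \<Rightarrow> real^'r) \<Rightarrow> (real \<Rightarrow> real^'k)
   \<Rightarrow> (real \<Rightarrow> real^'j) \<Rightarrow> (real \<Rightarrow> real^'w) \<Rightarrow> (real \<Rightarrow> real^'c)
   \<Rightarrow> (real \<Rightarrow> real^'s) \<Rightarrow> (real \<Rightarrow> real^'f) \<Rightarrow> (real \<Rightarrow> real^'f) \<Rightarrow> (real \<Rightarrow> real^'s)
   \<Rightarrow> bool" where
  "sf_traj A B Ba Sa F1 F2 N C Da Fp Tp Kp Lp Dac F T K L
           u au ay f1 f2 w ac x zc zp z \<longleftrightarrow>
    (\<forall>t\<ge>0.
      (x has_vector_derivative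
         (A *v x t + B *v u t + Ba *v au t + F1 *v f1 t + F2 *v f2 t + N *v w t))
         (at t within {0..}) \<and>
      (zc has_vector_derivative
         (Fp *v zc t + Tp *v (B *v u t) + Kp *v (C *v x t + Da *v ay t)))
         (at t within {0..}) \<and>
      (zp has_vector_derivative
         (Fp *v zp t + Tp *v (B *v (u t + Sa *v au t)) + Kp *v (C *v x t)
          + Lp *v (zp t - (zc t + Dac *v ac t))))
         (at t within {0..}) \<and>
      (z has_vector_derivative
         (F *v z t + T *v (B *v (u t + Sa *v au t)) + K *v (C *v x t)
          + L *v (zp t - (zc t + Dac *v ac t))))
         (at t within {0..}))"

definition xhat :: "real^'o^'s \<Rightarrow> real^'s^'o \<Rightarrow> (real \<Rightarrow> real^'s) \<Rightarrow> (real \<Rightarrow> real^'s)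
    \<Rightarrow> real \<Rightarrow> real^'s" where
  "xhat H C x z t = z t + H *v (C *v x t)"

definition residual :: "real^'o^'s \<Rightarrow> real^'s^'o \<Rightarrow> (real \<Rightarrow> real^'s) \<Rightarrow> (real \<Rightarrow> real^'s)
    \<Rightarrow> real \<Rightarrow> real^'o" where
  "residual H C x z t = C *v x t - C *v xhat H C x z t"

end

theory Submission
  imports Defs
begin

text \<open>Under conditions 1 and 2 and with \<open>L = 0\<close>, the estimation error \<open>e = x - xhat\<close> obeys
  \<open>e' = F e + (I - H C) (F\<^sub>2 f\<^sub>2 + N \<omega>)\<close>: the command, the actuator attack (through
  \<open>B\<^sub>a = B S\<^sub>a\<close>) and the actuator fault cancel, and the filter states and hence the sensor
  and link attacks do not enter at all. Two runs that differ only in \<open>a\<^sub>u, a\<^sub>y, f\<^sub>1\<close> thus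
  have errors solving the same linear ODE from the same initial value; by uniqueness for
  linear ODEs (the energy \<open>exp (-2 K t) |d t|\<^sup>2\<close> of their difference \<open>d\<close>, with \<open>K\<close>
  a bound of the linear map, is nonincreasing) the errors, and so the
  residuals \<open>C e\<close>, coincide.\<close>

lemma linear_ode_zero_initial_value:
  fixes f :: "'a::real_inner \<Rightarrow> 'a" and d :: "real \<Rightarrow> 'a"
  assumes f: "bounded_linear f"
    and deriv: "\<forall>s\<ge>0. (d has_vector_derivative f (d s)) (at s within {0..})"
    and init: "d 0 = 0"
    and t: "t \<ge> 0"
  shows "d t = 0"
proof -
  obtain K where K: "\<And>v. norm (f v) \<le> norm v * K"
    using bounded_linear.bounded[OF f] by blast
  have inner_le: "d s \<bullet> f (d s) \<le> K * (d s \<bullet> d s)" for s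
  proof -
    have "d s \<bullet> f (d s) \<le> norm (d s) * norm (f (d s))"
      by (rule order_trans[OF abs_ge_self Cauchy_Schwarz_ineq2])
    also have "\<dots> \<le> norm (d s) * (norm (d s) * K)"
      by (intro mult_left_mono K) simp
    finally show ?thesis
      by (simp add: power2_norm_eq_inner[symmetric] power2_eq_square algebra_simps)
  qed
  define energy where "energy s = exp (- (2 * K) * s) * (d s \<bullet> d s)" for s
  define energy' where
    "energy' s = exp (- (2 * K) * s) * (- (2 * K) * (d s \<bullet> d s) + 2 * (d s \<bullet> f (d s)))" for s
  have energy_deriv: "(energy has_derivative (\<lambda>h. h * energy' s)) (at s within {0..t})"
    if "0 \<le> s" "s \<le> t" for s
  proof -
    have "(d has_derivative (\<lambda>h. h *\<^sub>R f (d s))) (at s within {0..t})"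
      using deriv that has_vector_derivative_within_subset[of d _ s "{0..}" "{0..t}"]
      by (auto simp: has_vector_derivative_def)
    then show ?thesis
      unfolding energy_def energy'_def
      by (auto intro!: derivative_eq_intros simp: algebra_simps inner_commute)
  qed
  obtain \<xi> where "\<xi> \<in> {0..t}" and "energy t - energy 0 = t * energy' \<xi>"
    using mvt_very_simple[OF t energy_deriv] by auto
  moreover have "energy' \<xi> \<le> 0"
    using inner_le[of \<xi>] by (simp add: energy'_def mult_nonneg_nonpos)
  ultimately have "energy t \<le> 0"
    using init t by (simp add: energy_def mult_nonneg_nonpos)
  then have "d t \<bullet> d t \<le> 0"
    by (simp add: energy_def mult_le_0_iff)
  then show "d t = 0"
    by (metis inner_ge_zero inner_eq_zero_iff order_antisym)
qed

lemma linear_ode_solutions_unique: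
  fixes f :: "'a::real_inner \<Rightarrow> 'a" and g :: "real \<Rightarrow> 'a" and e e' :: "real \<Rightarrow> 'a"
  assumes f: "bounded_linear f"
    and e: "\<forall>s\<ge>0. (e has_vector_derivative f (e s) + g s) (at s within {0..})"
    and e': "\<forall>s\<ge>0. (e' has_vector_derivative f (e' s) + g s) (at s within {0..})"
    and init: "e' 0 = e 0"
    and t: "t \<ge> 0"
  shows "e' t = e t"
proof -
  have "\<forall>s\<ge>0. ((\<lambda>s. e' s - e s) has_vector_derivative f (e' s - e s)) (at s within {0..})"
  proof (intro allI impI)
    fix s :: real assume "s \<ge> 0"
    then have "((\<lambda>s. e' s - e s) has_vector_derivative (f (e' s) + g s) - (f (e s) + g s))
        (at s within {0..})"
      using e e' by (intro derivative_intros) auto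
    then show "((\<lambda>s. e' s - e s) has_vector_derivative f (e' s - e s)) (at s within {0..})"
      by (simp add: linear_diff[OF bounded_linear.linear[OF f]])
  qed
  from linear_ode_zero_initial_value[OF f this _ t] init show ?thesis
    by simp
qed

lemma residual_eq_output_error: "residual H C x z t = C *v (x t - xhat H C x z t)"
  by (simp add: residual_def matrix_vector_mult_diff_distrib)

lemma sf_error_dynamics_rhs:
  fixes A :: "real^'s^'s" and H :: "real^'o^'s" and C :: "real^'s^'o"
  assumes Ba: "Ba = B ** Sa"
    and F: "F = A - H ** C ** A - K1 ** C"
    and K: "K = K1 + F ** H"
    and L: "L = 0"
    and T: "T = mat 1 - H ** C"
    and F1_annihilated: "(mat 1 - H ** C) ** F1 = 0"
  shows "(A *v x + B *v u + Ba *v au + F1 *v f1 + F2 *v f2 + N *v w)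
      - ((F *v z + T *v (B *v (u + Sa *v au)) + K *v (C *v x) + L *v v)
         + H *v (C *v (A *v x + B *v u + Ba *v au + F1 *v f1 + F2 *v f2 + N *v w)))
    = F *v (x - (z + H *v (C *v x))) + (mat 1 - H ** C) *v (F2 *v f2)
      + (mat 1 - H ** C) *v (N *v w)"
proof -
  have "(mat 1 - H ** C) *v (F1 *v f1) = 0"
    by (simp add: matrix_vector_mul_assoc F1_annihilated)
  then show ?thesis
    unfolding Ba F K L T
    by (simp add: matrix_vector_mul_assoc[symmetric] matrix_vector_mult_add_rdistrib
        matrix_vector_mult_diff_rdistrib matrix_vector_right_distrib
        matrix_vector_mult_diff_distrib algebra_simps)
qed

lemma sf_error_has_vector_derivative:
  fixes A :: "real^'s^'s" and H :: "real^'o^'s" and C :: "real^'s^'o"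
  assumes "Ba = B ** Sa"
    and "F = A - H ** C ** A - K1 ** C"
    and "K = K1 + F ** H"
    and "L = 0"
    and "T = mat 1 - H ** C"
    and "(mat 1 - H ** C) ** F1 = 0"
    and traj: "sf_traj A B Ba Sa F1 F2 N C Da Fp Tp Kp Lp Dac F T K L
                 u au ay f1 f2 w ac x zc zp z"
    and t: "t \<ge> 0"
  shows "((\<lambda>s. x s - xhat H C x z s) has_vector_derivative
           (F *v (x t - xhat H C x z t) + (mat 1 - H ** C) *v (F2 *v f2 t)
            + (mat 1 - H ** C) *v (N *v w t))) (at t within {0..})"
proof -
  let ?x' = "A *v x t + B *v u t + Ba *v au t + F1 *v f1 t + F2 *v f2 t + N *v w t"
  let ?z' = "F *v z t + T *v (B *v (u t + Sa *v au t)) + K *v (C *v x t)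
             + L *v (zp t - (zc t + Dac *v ac t))"
  from traj t have "(x has_vector_derivative ?x') (at t within {0..})"
    and "(z has_vector_derivative ?z') (at t within {0..})"
    unfolding sf_traj_def by auto
  then have "((\<lambda>s. x s - (z s + H *v (C *v x s))) has_vector_derivative
      ?x' - (?z' + H *v (C *v ?x'))) (at t within {0..})"
    by (intro derivative_intros
        bounded_linear.has_vector_derivative[OF matrix_vector_mul_bounded_linear])
  then show ?thesis
    unfolding xhat_def sf_error_dynamics_rhs[OF assms(1-6)] .
qed

theorem proposition4:
  fixes A :: "real^'s^'s" and B :: "real^'m^'s" and Ba :: "real^'q^'s" and Sa :: "real^'q^'m"
    and F1 :: "real^'k^'s" and F2 :: "real^'j^'s" and N :: "real^'w^'s"
    and C :: "real^'s^'o" and Da :: "real^'r^'o"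
    and Fp :: "real^'f^'f" and Tp :: "real^'s^'f" and Kp :: "real^'o^'f" and Lp :: "real^'f^'f"
    and Dac :: "real^'c^'f"
    and F :: "real^'s^'s" and T :: "real^'s^'s" and K :: "real^'o^'s" and L :: "real^'f^'s"
    and H :: "real^'o^'s" and K1 :: "real^'o^'s"
    and u :: "real \<Rightarrow> real^'m" and f2 :: "real \<Rightarrow> real^'j" and w :: "real \<Rightarrow> real^'w"
    and ac :: "real \<Rightarrow> real^'c"
    and au au' :: "real \<Rightarrow> real^'q" and ay ay' :: "real \<Rightarrow> real^'r"
    and f1 f1' :: "real \<Rightarrow> real^'k"
    and x x' z z' :: "real \<Rightarrow> real^'s" and zc zc' zp zp' :: "real \<Rightarrow> real^'f"
  assumes Ba_def: "Ba = B ** Sa"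
    and F_def: "F = A - H ** C ** A - K1 ** C"
    and K_def: "K = K1 + F ** H"
    and L0: "L = 0"
    and cond1: "T = mat 1 - H ** C"
    and cond2: "(mat 1 - H ** C) ** F1 = 0"
    and cond3: "Hurwitz (block2 F (- L) (0 :: real^'s^'f) (Fp + Lp))"
    and traj: "sf_traj A B Ba Sa F1 F2 N C Da Fp Tp Kp Lp Dac F T K L
                 u au ay f1 f2 w ac x zc zp z"
    and traj': "sf_traj A B Ba Sa F1 F2 N C Da Fp Tp Kp Lp Dac F T K L
                 u au' ay' f1' f2 w ac x' zc' zp' z'"
    and init: "x' 0 = x 0" "zc' 0 = zc 0" "zp' 0 = zp 0" "z' 0 = z 0"
  shows "(\<forall>t\<ge>0. ((\<lambda>s. x s - xhat H C x z s) has_vector_derivative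
              (F *v (x t - xhat H C x z t) + (mat 1 - H ** C) *v (F2 *v f2 t)
               + (mat 1 - H ** C) *v (N *v w t))) (at t within {0..})
           \<and> residual H C x z t = C *v (x t - xhat H C x z t))
       \<and> (\<forall>t\<ge>0. residual H C x' z' t = residual H C x z t)"
proof -
  let ?forcing = "\<lambda>t. (mat 1 - H ** C) *v (F2 *v f2 t) + (mat 1 - H ** C) *v (N *v w t)"
  note error_deriv = sf_error_has_vector_derivative[OF Ba_def F_def K_def L0 cond1 cond2]
  have "\<forall>t\<ge>0. ((\<lambda>s. x s - xhat H C x z s) has_vector_derivative
      F *v (x t - xhat H C x z t) + ?forcing t) (at t within {0..})"
    and "\<forall>t\<ge>0. ((\<lambda>s. x' s - xhat H C x' z' s) has_vector_derivative
      F *v (x' t - xhat H C x' z' t) + ?forcing t) (at t within {0..})"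
    using error_deriv[OF traj] error_deriv[OF traj'] by (simp_all add: add.assoc)
  note errors_eq = linear_ode_solutions_unique[OF matrix_vector_mul_bounded_linear this]
  have "x' t - xhat H C x' z' t = x t - xhat H C x z t" if "t \<ge> 0" for t
    using errors_eq[OF _ that] init by (simp add: xhat_def)
  then show ?thesis
    using error_deriv[OF traj] by (simp add: residual_eq_output_error)
qed

end
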